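(* Let $n\ge2$ and $D>0$. There exist $t_1,C>0$ such that for all $t\in(0,t_1)$, $$t\int_{\mathbb R}\big|\bar s^{(n)}_t(x)-\tfrac{d}{dx}\log p^{(n)}_t(x)\big|^2p^{(n)}_t(x)\,dx\le C\exp\!\big(-\Delta^2/(9t)\big).$$
   Context: $y_k=2(k-1)\Delta-D$ ($k\in[n]$), $\Delta=D/(n-1)$, $z_k=y_k+\Delta$ ($k\in[n-1]$). $p_{\mathcal N}(x;\sigma)=(\sqrt{2\pi}\sigma)^{-1}e^{-x^2/(2\sigma^2)}$, $p^{(n)}_t(x)=\frac1n\sum_kp_{\mathcal N}(x-y_k;\sqrt t)$. Piecewise-linear ESF: $\bar s^{(n)}_t(x)=(y_1-x)/t$ if $x\le z_1$; $(y_k-x)/t$ if $x\in[z_{k-1},z_k]$, $k\in\{2,\dots,n-1\}$; $(y_n-x)/t$ if $x\ge z_{n-1}$. (For $n=2$, $D=\Delta=1$: $\bar s_t(x)=(\mathrm{sgn}(x)-x)/t$.) *)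

theory Defs
  imports "HOL-Analysis.Analysis"
begin

definition Delta :: "nat \<Rightarrow> real \<Rightarrow> real" where
  "Delta n D = D / (real n - 1)"

definition ypt :: "nat \<Rightarrow> real \<Rightarrow> nat \<Rightarrow> real" where
  "ypt n D k = 2 * (real k - 1) * Delta n D - D"

definition zpt :: "nat \<Rightarrow> real \<Rightarrow> nat \<Rightarrow> real" where
  "zpt n D k = ypt n D k + Delta n D"

definition gauss_pdf :: "real \<Rightarrow> real \<Rightarrow> real" where
  "gauss_pdf x \<sigma> = exp (- x\<^sup>2 / (2 * \<sigma>\<^sup>2)) / (sqrt (2 * pi) * \<sigma>)"

definition mix_density :: "nat \<Rightarrow> real \<Rightarrow> real \<Rightarrow> real \<Rightarrow> real" where
  "mix_density n D t x = (1 / real n) * (\<Sum>k=1..n. gauss_pdf (x - ypt n D k) (sqrt t))"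

text \<open>At the breakpoints z_k the two adjacent formulas
  in the paper differ; we use the left-closed convention (y_k for x in (z_{k-1}, z_k]),
  which is immaterial for the integral (measure-zero set).\<close>
definition esf :: "nat \<Rightarrow> real \<Rightarrow> real \<Rightarrow> real \<Rightarrow> real" where
  "esf n D t x =
     (if x \<le> zpt n D 1 then (ypt n D 1 - x) / t
      else if x \<ge> zpt n D (n - 1) then (ypt n D n - x) / t
      else (ypt n D (LEAST k. 2 \<le> k \<and> k \<le> n - 1 \<and> x \<le> zpt n D k) - x) / t)"

end

theory Submission
  imports Defs "HOL-Probability.Distributions"
begin

text \<open>At every point x the empirical score picks a centre y_c with every other centre at
  distance at least \<Delta>. The true score is the posterior mean of (y_k - x)/t, so the two
  differ by a posterior average of (y_k - y_c)/t, whose weights for k \<noteq> c are Gaussian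
  densities evaluated at distance at least \<Delta>. Splitting exp(-u^2/(2t)) into two halves
  bounds each such weight by exp(-\<Delta>^2/(4t)) times a Gaussian density of variance 2t,
  which integrates to 1. Hence the weighted Fisher gap is O(exp(-\<Delta>^2/(4t))/t^2), and
  the extra factor 1/t is absorbed by weakening the exponent to \<Delta>^2/(9t).\<close>

lemma gauss_pdf_pos: "t > 0 \<Longrightarrow> gauss_pdf u (sqrt t) > 0"
  unfolding gauss_pdf_def by auto

lemma gauss_pdf_shift_has_real_derivative:
  assumes "t > 0"
  shows "((\<lambda>u. gauss_pdf (u - a) (sqrt t)) has_real_derivative
           gauss_pdf (x - a) (sqrt t) * (a - x) / t) (at x)"
proof -
  have explicit: "gauss_pdf (u - a) (sqrt t) = exp (- (u - a)\<^sup>2 / (2 * t)) / (sqrt (2 * pi) * sqrt t)"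
    for u using assms unfolding gauss_pdf_def by simp
  have "((\<lambda>u. exp (- (u - a)\<^sup>2 / (2 * t)) / c) has_real_derivative
      exp (- (x - a)\<^sup>2 / (2 * t)) / c * (a - x) / t) (at x)" if "c \<noteq> 0" for c
    using assms that by (auto intro!: derivative_eq_intros simp: field_simps power2_eq_square)
  from this[of "sqrt (2 * pi) * sqrt t"] assms
  show ?thesis
    unfolding explicit by simp
qed

lemma gauss_pdf_le_normal_density:
  assumes "t > 0" "0 \<le> d" "d \<le> \<bar>x - a\<bar>"
  shows "gauss_pdf (x - a) (sqrt t)
           \<le> sqrt 2 * exp (- d\<^sup>2 / (4 * t)) * normal_density a (sqrt (2 * t)) x"
proof -
  define u where "u = x - a"
  have split: "exp (- u\<^sup>2 / (2 * t)) = exp (- u\<^sup>2 / (4 * t)) * exp (- u\<^sup>2 / (4 * t))"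
    by (simp add: exp_add[symmetric])
  have "d\<^sup>2 \<le> u\<^sup>2"
    using assms unfolding u_def by (metis abs_le_square_iff abs_of_nonneg)
  then have "exp (- u\<^sup>2 / (4 * t)) \<le> exp (- d\<^sup>2 / (4 * t))"
    using assms by (simp add: divide_right_mono)
  then have "exp (- u\<^sup>2 / (2 * t)) / (sqrt (2 * pi) * sqrt t)
      \<le> exp (- d\<^sup>2 / (4 * t)) * exp (- u\<^sup>2 / (4 * t)) / (sqrt (2 * pi) * sqrt t)"
    unfolding split using assms by (intro divide_right_mono mult_right_mono) auto
  also have "\<dots> = sqrt 2 * exp (- d\<^sup>2 / (4 * t)) * normal_density a (sqrt (2 * t)) x"
    using assms unfolding normal_density_def u_def
    by (simp add: real_sqrt_mult power2_commute field_simps)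
  finally show ?thesis
    unfolding gauss_pdf_def u_def using assms by simp
qed

lemma exp_quarter_div_le_exp_ninth:
  fixes t d :: real
  assumes "t > 0" "d > 0"
  shows "exp (- d\<^sup>2 / (4 * t)) / t \<le> 36 / (5 * d\<^sup>2) * exp (- d\<^sup>2 / (9 * t))"
proof -
  define a where "a = 5 * d\<^sup>2 / (36 * t)"
  have "a > 0" unfolding a_def using assms by auto
  have split: "exp (- d\<^sup>2 / (4 * t)) = exp (- d\<^sup>2 / (9 * t)) * exp (- a)"
    unfolding a_def exp_add[symmetric] by (rule arg_cong[where f = exp]) (simp add: field_simps)
  have "a \<le> exp a"
    using exp_ge_add_one_self[of a] by linarith
  then have "a * exp (- a) \<le> 1"
    by (simp add: exp_minus field_simps)
  then have "exp (- a) / t \<le> 36 / (5 * d\<^sup>2)"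
    using \<open>a > 0\<close> assms unfolding a_def by (simp add: field_simps)
  then have "exp (- d\<^sup>2 / (9 * t)) * (exp (- a) / t) \<le> exp (- d\<^sup>2 / (9 * t)) * (36 / (5 * d\<^sup>2))"
    by (intro mult_left_mono) auto
  then show ?thesis
    unfolding split by (simp add: algebra_simps)
qed

lemma weighted_sum_sq_le:
  fixes w a :: "'a \<Rightarrow> real"
  assumes "\<And>k. k \<in> I \<Longrightarrow> 0 \<le> w k" and "\<And>k. k \<in> I \<Longrightarrow> \<bar>a k\<bar> \<le> R"
  shows "(\<Sum>k\<in>I. w k * a k)\<^sup>2 \<le> R * (\<Sum>k\<in>I. w k) * (\<Sum>k\<in>I. w k * \<bar>a k\<bar>)"
proof -
  define M where "M = (\<Sum>k\<in>I. w k * \<bar>a k\<bar>)"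
  have "\<bar>\<Sum>k\<in>I. w k * a k\<bar> \<le> M"
    unfolding M_def using sum_abs[of "\<lambda>k. w k * a k" I] assms(1) by (simp add: abs_mult)
  moreover have "M \<le> R * (\<Sum>k\<in>I. w k)"
    unfolding M_def sum_distrib_left
    using assms by (intro sum_mono) (metis mult.commute mult_left_mono)
  ultimately have "\<bar>\<Sum>k\<in>I. w k * a k\<bar> * \<bar>\<Sum>k\<in>I. w k * a k\<bar> \<le> R * (\<Sum>k\<in>I. w k) * M"
    by (intro mult_mono) auto
  then show ?thesis
    unfolding M_def by (simp add: power2_eq_square)
qed

lemma Delta_pos: "n \<ge> 2 \<Longrightarrow> D > 0 \<Longrightarrow> Delta n D > 0"
  unfolding Delta_def by auto

lemma ypt_diff: "ypt n D k - ypt n D c = 2 * (real k - real c) * Delta n D"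
  unfolding ypt_def by (simp add: algebra_simps)

lemma ypt_bounds:
  assumes "n \<ge> 2" "D > 0" "1 \<le> k" "k \<le> n"
  shows "- D \<le> ypt n D k" "ypt n D k \<le> D"
proof -
  define q where "q = (real k - 1) / (real n - 1)"
  have "0 \<le> q" "q \<le> 1"
    unfolding q_def using assms by auto
  then have "0 \<le> 2 * D * q" "2 * D * q \<le> 2 * D"
    using assms mult_left_le[of q "2 * D"] by auto
  moreover have "ypt n D k = 2 * D * q - D"
    unfolding ypt_def Delta_def q_def by simp
  ultimately show "- D \<le> ypt n D k" "ypt n D k \<le> D"
    by linarith+
qed

lemma grid_separation:
  assumes "n \<ge> 2" "D > 0" "1 \<le> k" "k \<le> n" "k \<noteq> c"
    and above: "c < k \<Longrightarrow> x \<le> ypt n D c + Delta n D"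
    and below: "k < c \<Longrightarrow> ypt n D c - Delta n D \<le> x"
  shows "Delta n D \<le> \<bar>x - ypt n D k\<bar>"
proof (cases "c < k")
  case True
  then have "2 * Delta n D \<le> ypt n D k - ypt n D c"
    using ypt_diff[of n D k c] Delta_pos[OF assms(1,2)] by (simp add: mult_right_mono)
  with above True show ?thesis by auto
next
  case False
  then have "2 * Delta n D \<le> ypt n D c - ypt n D k"
    using ypt_diff[of n D c k] Delta_pos[OF assms(1,2)] assms(5) by (simp add: mult_right_mono)
  with below False assms(5) show ?thesis by auto
qed

text \<open>The cell of x: the index c with z_{c-1} \<le> x \<le> z_c, with the conventions
  z_0 = -\<infinity> and z_n = +\<infinity>.\<close>

lemma esf_cell:
  assumes "n \<ge> 2"
  obtains c where "1 \<le> c" "c \<le> n" "esf n D t x = (ypt n D c - x) / t"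
    "c < n \<Longrightarrow> x \<le> zpt n D c" "1 < c \<Longrightarrow> zpt n D (c - 1) \<le> x"
proof -
  consider "x \<le> zpt n D 1" | "\<not> x \<le> zpt n D 1" "zpt n D (n - 1) \<le> x"
    | "\<not> x \<le> zpt n D 1" "\<not> zpt n D (n - 1) \<le> x"
    by blast
  then show ?thesis
  proof cases
    case 1
    then show ?thesis using assms by (intro that[of 1]) (auto simp: esf_def)
  next
    case 2
    then show ?thesis using assms by (intro that[of n]) (auto simp: esf_def)
  next
    case 3
    define P where "P k \<longleftrightarrow> 2 \<le> k \<and> k \<le> n - 1 \<and> x \<le> zpt n D k" for k
    define c where "c = (LEAST k. P k)"
    have "n - 1 \<noteq> 1" using 3 by auto
    then have "P (n - 1)" using 3 assms unfolding P_def by auto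
    then have "P c" unfolding c_def by (rule LeastI)
    have "zpt n D (c - 1) \<le> x"
    proof (cases "c = 2")
      case True
      then show ?thesis using 3 by simp
    next
      case False
      then have "\<not> P (c - 1)"
        using not_less_Least[of "c - 1" P] \<open>P c\<close> unfolding c_def P_def by auto
      then show ?thesis using \<open>P c\<close> False unfolding P_def by auto
    qed
    moreover have "esf n D t x = (ypt n D c - x) / t"
      using 3 unfolding esf_def c_def P_def by simp
    ultimately show ?thesis using \<open>P c\<close> unfolding P_def by (intro that[of c]) auto
  qed
qed

lemma esf_nearest_centre:
  assumes "n \<ge> 2" "D > 0"
  obtains c where "1 \<le> c" "c \<le> n" "esf n D t x = (ypt n D c - x) / t"
    "\<And>k. 1 \<le> k \<Longrightarrow> k \<le> n \<Longrightarrow> k \<noteq> c \<Longrightarrow> Delta n D \<le> \<bar>x - ypt n D k\<bar>"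
proof -
  obtain c where c: "1 \<le> c" "c \<le> n" "esf n D t x = (ypt n D c - x) / t"
    and right: "c < n \<Longrightarrow> x \<le> zpt n D c" and left: "1 < c \<Longrightarrow> zpt n D (c - 1) \<le> x"
    using esf_cell[OF assms(1)] by blast
  have zpt_prev: "zpt n D (c - 1) = ypt n D c - Delta n D" if "1 < c"
    using ypt_diff[of n D c "c - 1"] that unfolding zpt_def by (simp add: of_nat_diff)
  have "Delta n D \<le> \<bar>x - ypt n D k\<bar>" if "1 \<le> k" "k \<le> n" "k \<noteq> c" for k
    by (rule grid_separation[OF assms that]) (use right left zpt_prev c(2) that in \<open>auto simp: zpt_def\<close>)
  with c show ?thesis by (intro that) auto
qed

lemma mix_density_pos: "n \<ge> 1 \<Longrightarrow> t > 0 \<Longrightarrow> mix_density n D t x > 0"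
  unfolding mix_density_def using gauss_pdf_pos by (intro mult_pos_pos sum_pos) auto

lemma deriv_ln_mix_density:
  assumes "t > 0" "n \<ge> 1"
  shows "deriv (\<lambda>u. ln (mix_density n D t u)) x
    = (\<Sum>k=1..n. gauss_pdf (x - ypt n D k) (sqrt t) * (ypt n D k - x))
      / (t * (\<Sum>k=1..n. gauss_pdf (x - ypt n D k) (sqrt t)))"
proof -
  have "(mix_density n D t has_real_derivative
      (1 / real n) * (\<Sum>k=1..n. gauss_pdf (x - ypt n D k) (sqrt t) * (ypt n D k - x) / t)) (at x)"
    unfolding mix_density_def[abs_def]
    by (intro DERIV_cmult DERIV_sum gauss_pdf_shift_has_real_derivative assms(1))
  from DERIV_chain2[OF DERIV_ln this] have
    "((\<lambda>u. ln (mix_density n D t u)) has_real_derivative inverse (mix_density n D t x)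
       * ((1 / real n) * (\<Sum>k=1..n. gauss_pdf (x - ypt n D k) (sqrt t) * (ypt n D k - x) / t))) (at x)"
    using mix_density_pos assms by auto
  from DERIV_imp_deriv[OF this] show ?thesis
    using assms unfolding mix_density_def
    by (simp add: sum_divide_distrib[symmetric] field_simps)
qed

lemma esf_minus_score:
  assumes "n \<ge> 1" "t > 0"
    and esf_c: "esf n D t x = (ypt n D c - x) / t"
  shows "esf n D t x - deriv (\<lambda>u. ln (mix_density n D t u)) x
    = - (\<Sum>k=1..n. gauss_pdf (x - ypt n D k) (sqrt t) * (ypt n D k - ypt n D c))
      / (t * (\<Sum>k=1..n. gauss_pdf (x - ypt n D k) (sqrt t)))"
proof -
  define \<phi> where "\<phi> k = gauss_pdf (x - ypt n D k) (sqrt t)" for k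
  have "(\<Sum>k=1..n. \<phi> k) > 0"
    unfolding \<phi>_def using assms gauss_pdf_pos by (intro sum_pos) auto
  moreover have "(\<Sum>k=1..n. \<phi> k * (ypt n D k - x))
      = (\<Sum>k=1..n. \<phi> k * (ypt n D k - ypt n D c)) + (ypt n D c - x) * (\<Sum>k=1..n. \<phi> k)"
    by (simp add: sum.distrib[symmetric] sum_distrib_left algebra_simps)
  ultimately show ?thesis
    using assms deriv_ln_mix_density[of t n D x] unfolding esf_c \<phi>_def[symmetric]
    by (simp add: field_simps)
qed

lemma weighted_centre_gap_le:
  assumes "n \<ge> 2" "D > 0" "t > 0" "1 \<le> c" "c \<le> n" "1 \<le> k" "k \<le> n"
    and far: "k \<noteq> c \<Longrightarrow> Delta n D \<le> \<bar>x - ypt n D k\<bar>"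
  shows "gauss_pdf (x - ypt n D k) (sqrt t) * \<bar>ypt n D k - ypt n D c\<bar>
    \<le> 2 * sqrt 2 * D * exp (- (Delta n D)\<^sup>2 / (4 * t)) * normal_density (ypt n D k) (sqrt (2 * t)) x"
proof (cases "k = c")
  case False
  have "gauss_pdf (x - ypt n D k) (sqrt t)
      \<le> sqrt 2 * exp (- (Delta n D)\<^sup>2 / (4 * t)) * normal_density (ypt n D k) (sqrt (2 * t)) x"
    using gauss_pdf_le_normal_density assms(3) far[OF False] Delta_pos[OF assms(1,2)] by simp
  moreover have "\<bar>ypt n D k - ypt n D c\<bar> \<le> 2 * D"
    using ypt_bounds[OF assms(1,2,6,7)] ypt_bounds[OF assms(1,2,4,5)] by auto
  ultimately have "gauss_pdf (x - ypt n D k) (sqrt t) * \<bar>ypt n D k - ypt n D c\<bar>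
      \<le> sqrt 2 * exp (- (Delta n D)\<^sup>2 / (4 * t)) * normal_density (ypt n D k) (sqrt (2 * t)) x * (2 * D)"
    using gauss_pdf_pos[OF assms(3)] by (intro mult_mono) (auto simp: less_imp_le)
  then show ?thesis by (simp add: algebra_simps)
qed (use assms in simp)

lemma fisher_gap_pointwise_le:
  assumes "n \<ge> 2" "D > 0" "t > 0"
  shows "(esf n D t x - deriv (\<lambda>u. ln (mix_density n D t u)) x)\<^sup>2 * mix_density n D t x
    \<le> 4 * sqrt 2 * D\<^sup>2 / (real n * t\<^sup>2) * exp (- (Delta n D)\<^sup>2 / (4 * t))
        * (\<Sum>k=1..n. normal_density (ypt n D k) (sqrt (2 * t)) x)"
proof -
  obtain c where c: "1 \<le> c" "c \<le> n" "esf n D t x = (ypt n D c - x) / t"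
    and far: "\<And>k. 1 \<le> k \<Longrightarrow> k \<le> n \<Longrightarrow> k \<noteq> c \<Longrightarrow> Delta n D \<le> \<bar>x - ypt n D k\<bar>"
    using esf_nearest_centre[OF assms(1,2)] by blast
  define y where "y = ypt n D"
  define \<phi> where "\<phi> k = gauss_pdf (x - y k) (sqrt t)" for k
  define S where "S = (\<Sum>k=1..n. \<phi> k)"
  define E where "E = exp (- (Delta n D)\<^sup>2 / (4 * t))"
  define N where "N k = normal_density (y k) (sqrt (2 * t)) x" for k
  have \<phi>_pos: "\<phi> k > 0" for k
    unfolding \<phi>_def using gauss_pdf_pos assms by auto
  have "S > 0" unfolding S_def using \<phi>_pos assms by (intro sum_pos) auto
  have spread: "\<bar>y k - y c\<bar> \<le> 2 * D" if "1 \<le> k" "k \<le> n" for k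
    using ypt_bounds[OF assms(1,2) that] ypt_bounds[OF assms(1,2) c(1,2)] unfolding y_def by auto
  have tail: "\<phi> k * \<bar>y k - y c\<bar> \<le> 2 * sqrt 2 * D * E * N k" if "1 \<le> k" "k \<le> n" for k
    unfolding \<phi>_def y_def E_def N_def using assms c(1,2) that far[OF that]
    by (intro weighted_centre_gap_le) auto
  have gap: "esf n D t x - deriv (\<lambda>u. ln (mix_density n D t u)) x
      = - (\<Sum>k=1..n. \<phi> k * (y k - y c)) / (t * S)"
    unfolding \<phi>_def y_def S_def using assms by (intro esf_minus_score c(3)) auto
  have mix: "mix_density n D t x = S / real n"
    unfolding mix_density_def S_def \<phi>_def y_def by simp
  have "(esf n D t x - deriv (\<lambda>u. ln (mix_density n D t u)) x)\<^sup>2 * mix_density n D t x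
      = (\<Sum>k=1..n. \<phi> k * (y k - y c))\<^sup>2 / (real n * t\<^sup>2 * S)"
    unfolding gap mix using assms \<open>S > 0\<close> by (simp add: field_simps power2_eq_square)
  also have "\<dots> \<le> 2 * D * S * (\<Sum>k=1..n. \<phi> k * \<bar>y k - y c\<bar>) / (real n * t\<^sup>2 * S)"
    unfolding S_def using weighted_sum_sq_le[of "{1..n}" \<phi> "\<lambda>k. y k - y c" "2 * D"] \<phi>_pos spread \<open>S > 0\<close> assms
    by (intro divide_right_mono) (auto simp: less_imp_le S_def)
  also have "\<dots> = 2 * D * (\<Sum>k=1..n. \<phi> k * \<bar>y k - y c\<bar>) / (real n * t\<^sup>2)"
    using \<open>S > 0\<close> by simp
  also have "\<dots> \<le> 2 * D * (\<Sum>k=1..n. 2 * sqrt 2 * D * E * N k) / (real n * t\<^sup>2)"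
    using tail assms by (intro divide_right_mono mult_left_mono sum_mono) auto
  also have "\<dots> = 4 * sqrt 2 * D\<^sup>2 / (real n * t\<^sup>2) * E * (\<Sum>k=1..n. N k)"
    by (simp only: sum_distrib_left[symmetric]) (simp add: power2_eq_square field_simps)
  finally show ?thesis unfolding E_def N_def y_def .
qed

lemma fisher_gap_integral_le:
  assumes "n \<ge> 2" "D > 0" "t > 0"
  shows "t * (\<integral>x. (esf n D t x - deriv (\<lambda>u. ln (mix_density n D t u)) x)\<^sup>2
                   * mix_density n D t x \<partial>lborel)
    \<le> 4 * sqrt 2 * D\<^sup>2 * (exp (- (Delta n D)\<^sup>2 / (4 * t)) / t)"
proof -
  define K where "K = 4 * sqrt 2 * D\<^sup>2 / (real n * t\<^sup>2) * exp (- (Delta n D)\<^sup>2 / (4 * t))"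
  define G where "G x = (\<Sum>k=1..n. normal_density (ypt n D k) (sqrt (2 * t)) x)" for x
  have "integrable lborel G" "(\<integral>x. G x \<partial>lborel) = real n"
    unfolding G_def using assms
    by (auto intro!: Bochner_Integration.integrable_sum integrable_normal_density
             simp: Bochner_Integration.integral_sum integral_normal_density)
  have "(\<integral>x. (esf n D t x - deriv (\<lambda>u. ln (mix_density n D t u)) x)\<^sup>2
                   * mix_density n D t x \<partial>lborel) \<le> (\<integral>x. K * G x \<partial>lborel)"
  proof (rule integral_mono')
    show "integrable lborel (\<lambda>x. K * G x)"
      using \<open>integrable lborel G\<close> by simp
    show "0 \<le> K * G x" for x
      unfolding K_def G_def using assms by (intro mult_nonneg_nonneg sum_nonneg) auto
  qed (use fisher_gap_pointwise_le[OF assms] in \<open>simp add: K_def G_def\<close>)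
  also have "\<dots> = K * real n"
    using \<open>(\<integral>x. G x \<partial>lborel) = real n\<close> by simp
  finally show ?thesis
    using assms unfolding K_def by (simp add: mult_left_mono field_simps power2_eq_square)
qed

theorem mainTheorem3:
  fixes n :: nat and D :: real
  assumes "n \<ge> 2" and "D > 0"
  shows "\<exists>t1 C. t1 > 0 \<and> C > 0 \<and>
    (\<forall>t. 0 < t \<and> t < t1 \<longrightarrow>
      t * (\<integral>x. (esf n D t x - deriv (\<lambda>u. ln (mix_density n D t u)) x)\<^sup>2
                   * mix_density n D t x \<partial>lborel)
      \<le> C * exp (- (Delta n D)\<^sup>2 / (9 * t)))"
proof -
  define C where "C = 4 * sqrt 2 * D\<^sup>2 * (36 / (5 * (Delta n D)\<^sup>2))"
  have "C > 0" unfolding C_def using assms Delta_pos[OF assms] by auto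
  moreover have "t * (\<integral>x. (esf n D t x - deriv (\<lambda>u. ln (mix_density n D t u)) x)\<^sup>2
                   * mix_density n D t x \<partial>lborel) \<le> C * exp (- (Delta n D)\<^sup>2 / (9 * t))"
    if "t > 0" for t
  proof -
    note fisher_gap_integral_le[OF assms \<open>t > 0\<close>]
    also have "4 * sqrt 2 * D\<^sup>2 * (exp (- (Delta n D)\<^sup>2 / (4 * t)) / t)
        \<le> 4 * sqrt 2 * D\<^sup>2 * (36 / (5 * (Delta n D)\<^sup>2) * exp (- (Delta n D)\<^sup>2 / (9 * t)))"
      using exp_quarter_div_le_exp_ninth \<open>t > 0\<close> Delta_pos[OF assms] by (intro mult_left_mono) auto
    also have "\<dots> = C * exp (- (Delta n D)\<^sup>2 / (9 * t))"
      unfolding C_def by simp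
    finally show ?thesis .
  qed
  ultimately show ?thesis by (intro exI[of _ 1] exI[of _ C]) auto
qed

end
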